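(* Let $\phi_+,\phi_-,\psi_+,\psi_-$ be unit vectors in $\mathbb{C}^2$ such that $0 < |\langle\phi_+,\phi_-\rangle| < 1$. Then there exists a unitary matrix $U$ such that $U\phi_+ = \psi_-$ and $U\phi_-$ is proportional neither to $\psi_+$ nor to $\psi_-$.
   Context: $\langle\cdot,\cdot\rangle$ denotes the standard Hermitian inner product on $\mathbb{C}^2$. *)

theory Defs
  imports "HOL-Analysis.Analysis"
begin

definition hinner :: "complex ^ 'n \<Rightarrow> complex ^ 'n \<Rightarrow> complex" where
  "hinner x y = (\<Sum>i\<in>UNIV. cnj (x $ i) * y $ i)"

definition is_unit_vec :: "complex ^ 'n \<Rightarrow> bool" where
  "is_unit_vec x \<longleftrightarrow> hinner x x = 1"

definition adjoint_mat :: "complex ^ 'n ^ 'm \<Rightarrow> complex ^ 'm ^ 'n" where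
  "adjoint_mat A = (\<chi> i j. cnj (A $ j $ i))"

definition unitary_mat :: "complex ^ 'n ^ 'n \<Rightarrow> bool" where
  "unitary_mat U \<longleftrightarrow> U ** adjoint_mat U = mat 1 \<and> adjoint_mat U ** U = mat 1"

definition proportional :: "complex ^ 'n \<Rightarrow> complex ^ 'n \<Rightarrow> bool" where
  "proportional x y \<longleftrightarrow> (\<exists>c::complex. x = c *s y)"

end

theory Submission
  imports Defs
begin

(* Complete a unit vector v of C^2 to the orthonormal basis (v, perp2 v), where
   perp2 (v1, v2) = (-cnj v2, cnj v1).  For |s| = 1 the unitary frame_map phip psim s sends
   phip to psim and perp2 phip to s * perp2 psim, hence phim to a * psim + s * b * perp2 psim with
   a = <phip, phim> and b = <perp2 phip, phim>.  By Parseval |a|^2 + |b|^2 = 1, so |a| < 1 gives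
   b \<noteq> 0 and the image is never proportional to psim.  Since a * b \<noteq> 0 the images for s = 1
   and s = -1 are linearly independent (their determinant is -2ab), so at least one of them is not
   proportional to psip. *)

lemma hinner_commute: "hinner y x = cnj (hinner x y)"
  by (simp add: hinner_def mult.commute)

lemma hinner_scale_left: "hinner (c *s x) y = cnj c * hinner x y"
  by (simp add: hinner_def sum_distrib_left algebra_simps)

lemma hinner_scale_right: "hinner x (c *s y) = c * hinner x y"
  by (simp add: hinner_def sum_distrib_left algebra_simps)

lemma adjoint_mat_mult_nth:
  "(adjoint_mat A ** B) $ i $ j = hinner (column i A) (column j B)"
  by (simp add: matrix_matrix_mult_def adjoint_mat_def hinner_def column_def)

lemma adjoint_mat_mult_vec_nth:
  "(adjoint_mat A *v y) $ i = hinner (column i A) y"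
  by (simp add: matrix_vector_mult_def adjoint_mat_def hinner_def column_def)

lemma adjoint_mat_matrix_mult: "adjoint_mat (A ** B) = adjoint_mat B ** adjoint_mat A"
  by (simp add: adjoint_mat_def matrix_matrix_mult_def vec_eq_iff mult.commute)

lemma unitary_mat_iff_adjoint_mult_left: "unitary_mat U \<longleftrightarrow> adjoint_mat U ** U = mat 1"
  unfolding unitary_mat_def using matrix_left_right_inverse by blast

lemma adjoint_mat_adjoint_mat: "adjoint_mat (adjoint_mat A) = A"
  by (simp add: adjoint_mat_def vec_eq_iff)

lemma unitary_mat_adjoint_mat: "unitary_mat A \<Longrightarrow> unitary_mat (adjoint_mat A)"
  by (simp add: unitary_mat_def adjoint_mat_adjoint_mat)

lemma unitary_mat_mult:
  assumes "unitary_mat A" and "unitary_mat B"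
  shows "unitary_mat (A ** B)"
proof -
  have "adjoint_mat (A ** B) ** (A ** B) = adjoint_mat B ** (adjoint_mat A ** A) ** B"
    by (simp add: adjoint_mat_matrix_mult matrix_mul_assoc)
  also have "\<dots> = mat 1"
    using assms by (simp add: unitary_mat_def)
  finally show ?thesis
    by (simp add: unitary_mat_iff_adjoint_mult_left)
qed

lemma hinner_two: "hinner (x :: complex ^ 2) y = cnj (x $ 1) * y $ 1 + cnj (x $ 2) * y $ 2"
  by (simp add: hinner_def sum_2)

definition perp2 :: "complex ^ 2 \<Rightarrow> complex ^ 2" where
  "perp2 x = vector [- cnj (x $ 2), cnj (x $ 1)]"

definition frame2 :: "complex ^ 2 \<Rightarrow> complex ^ 2 \<Rightarrow> complex ^ 2 ^ 2" where
  "frame2 x y = (\<chi> i j. if j = 1 then x $ i else y $ i)"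

definition det2 :: "complex ^ 2 \<Rightarrow> complex ^ 2 \<Rightarrow> complex" where
  "det2 x y = x $ 1 * y $ 2 - x $ 2 * y $ 1"

lemma hinner_perp2_self: "hinner (perp2 x) x = 0"
  by (simp add: hinner_two perp2_def)

lemma hinner_self_perp2: "hinner x (perp2 x) = 0"
  by (simp add: hinner_two perp2_def)

lemma hinner_perp2_perp2: "hinner (perp2 x) (perp2 x) = hinner x x"
  by (simp add: hinner_two perp2_def)

lemma hinner_perp2_parseval:
  "hinner x z * cnj (hinner x z) + hinner (perp2 x) z * cnj (hinner (perp2 x) z)
     = hinner x x * hinner z z"
  by (simp add: hinner_two perp2_def algebra_simps)

lemma column_frame2: "column 1 (frame2 x y) = x" "column 2 (frame2 x y) = y"
  by (simp_all add: column_def frame2_def vec_eq_iff)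

lemma frame2_mult_vec: "frame2 x y *v v = v $ 1 *s x + v $ 2 *s y"
  by (simp add: frame2_def matrix_vector_mult_def sum_2 vec_eq_iff mult.commute)

lemma unitary_mat_frame2:
  assumes "hinner x x = 1" and "hinner y y = 1" and "hinner x y = 0"
  shows "unitary_mat (frame2 x y)"
proof -
  have "hinner y x = 0"
    using assms(3) hinner_commute[of x y] by simp
  then have "(adjoint_mat (frame2 x y) ** frame2 x y) $ i $ j = mat 1 $ i $ j" for i j :: 2
    using assms exhaust_2[of i] exhaust_2[of j]
    by (auto simp: adjoint_mat_mult_nth column_frame2 mat_def)
  then show ?thesis
    by (simp add: unitary_mat_iff_adjoint_mult_left vec_eq_iff)
qed

lemma proportional_refl: "proportional x x"
  unfolding proportional_def by (metis vector_smult_lid)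

lemma det2_proportional:
  assumes "proportional x z" and "proportional y z"
  shows "det2 x y = 0"
  using assms by (auto simp: proportional_def det2_def)

lemma det2_frame:
  "det2 (a *s x + b *s perp2 x) (c *s x + d *s perp2 x) = (a * d - b * c) * hinner x x"
  by (simp add: det2_def hinner_two perp2_def algebra_simps)

lemma hinner_perp2_nonzero:
  assumes "is_unit_vec x" and "is_unit_vec z" and "cmod (hinner x z) < 1"
  shows "hinner (perp2 x) z \<noteq> 0"
proof
  assume "hinner (perp2 x) z = 0"
  then have "hinner x z * cnj (hinner x z) = 1"
    using assms(1,2) hinner_perp2_parseval[of x z] by (simp add: is_unit_vec_def)
  then have "(cmod (hinner x z))\<^sup>2 = 1"
    by (metis complex_norm_square of_real_eq_1_iff)
  then have "cmod (hinner x z) = 1"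
    using norm_ge_zero[of "hinner x z"] by (auto simp: power2_eq_1_iff)
  with assms(3) show False
    by simp
qed

definition frame_map :: "complex ^ 2 \<Rightarrow> complex ^ 2 \<Rightarrow> complex \<Rightarrow> complex ^ 2 ^ 2" where
  "frame_map x y s = frame2 y (s *s perp2 y) ** adjoint_mat (frame2 x (perp2 x))"

lemma unitary_mat_frame_map:
  assumes "is_unit_vec x" and "is_unit_vec y" and "cmod s = 1"
  shows "unitary_mat (frame_map x y s)"
  unfolding frame_map_def
proof (rule unitary_mat_mult)
  have "s * cnj s = 1"
    using assms(3) complex_norm_square[of s] by simp
  with assms(2) show "unitary_mat (frame2 y (s *s perp2 y))"
    by (intro unitary_mat_frame2)
      (simp_all add: is_unit_vec_def hinner_scale_left hinner_scale_right
        hinner_perp2_perp2 hinner_self_perp2)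
  show "unitary_mat (adjoint_mat (frame2 x (perp2 x)))"
    using assms(1) by (intro unitary_mat_adjoint_mat unitary_mat_frame2)
      (simp_all add: is_unit_vec_def hinner_perp2_perp2 hinner_self_perp2)
qed

lemma frame_map_mult_vec:
  "frame_map x y s *v z = hinner x z *s y + (s * hinner (perp2 x) z) *s perp2 y"
  by (simp add: frame_map_def flip: matrix_vector_mul_assoc)
    (simp add: frame2_mult_vec adjoint_mat_mult_vec_nth column_frame2 mult.commute)

lemma frame_map_mult_vec_self:
  assumes "is_unit_vec x"
  shows "frame_map x y s *v x = y"
  using assms by (simp add: frame_map_mult_vec hinner_perp2_self is_unit_vec_def)

lemma frame_map_not_proportional_target:
  assumes "is_unit_vec y" and "s \<noteq> 0" and "hinner (perp2 x) z \<noteq> 0"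
  shows "\<not> proportional (frame_map x y s *v z) y"
proof
  assume "proportional (frame_map x y s *v z) y"
  then have "det2 (frame_map x y s *v z) y = 0"
    using det2_proportional proportional_refl by blast
  moreover have "det2 (frame_map x y s *v z) y = - s * hinner (perp2 x) z"
    using assms(1) det2_frame[where b = "s * hinner (perp2 x) z" and x = y and c = 1 and d = 0]
    by (simp add: frame_map_mult_vec is_unit_vec_def)
  ultimately show False
    using assms(2,3) by simp
qed

lemma frame_map_sign_not_both_proportional:
  assumes "is_unit_vec y" and "hinner x z \<noteq> 0" and "hinner (perp2 x) z \<noteq> 0"
  shows "\<not> (proportional (frame_map x y 1 *v z) w \<and> proportional (frame_map x y (-1) *v z) w)"
proof
  assume "proportional (frame_map x y 1 *v z) w \<and> proportional (frame_map x y (-1) *v z) w"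
  then have "det2 (frame_map x y 1 *v z) (frame_map x y (-1) *v z) = 0"
    using det2_proportional by blast
  moreover have "det2 (frame_map x y 1 *v z) (frame_map x y (-1) *v z)
      = - 2 * hinner x z * hinner (perp2 x) z"
    using assms(1) det2_frame[where a = "hinner x z" and b = "hinner (perp2 x) z" and x = y
        and c = "hinner x z" and d = "- hinner (perp2 x) z"]
    by (simp add: frame_map_mult_vec is_unit_vec_def)
  ultimately show False
    using assms(2,3) by simp
qed

theorem lemma11:
  fixes phip phim psip psim :: "complex ^ 2"
  assumes "is_unit_vec phip" and "is_unit_vec phim"
    and "is_unit_vec psip" and "is_unit_vec psim"
    and "0 < cmod (hinner phip phim)" and "cmod (hinner phip phim) < 1"
  shows "\<exists>U :: complex ^ 2 ^ 2. unitary_mat U \<and> U *v phip = psim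
           \<and> \<not> proportional (U *v phim) psip \<and> \<not> proportional (U *v phim) psim"
proof -
  have "hinner phip phim \<noteq> 0"
    using assms(5) by auto
  moreover have "hinner (perp2 phip) phim \<noteq> 0"
    using assms(1,2,6) by (rule hinner_perp2_nonzero)
  ultimately obtain s :: complex
    where s: "cmod s = 1" and not_psip: "\<not> proportional (frame_map phip psim s *v phim) psip"
    using frame_map_sign_not_both_proportional[OF assms(4)] by (metis norm_minus_cancel norm_one)
  have "\<not> proportional (frame_map phip psim s *v phim) psim"
    using assms(4) s \<open>hinner (perp2 phip) phim \<noteq> 0\<close>
    by (intro frame_map_not_proportional_target) auto
  with assms(1,4) s not_psip show ?thesis
    using unitary_mat_frame_map frame_map_mult_vec_self by blast
qed

end
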